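(* Let $\nu>2$ and let $F_\nu$ be the CDF of the Student's $t$-distribution with $\nu$ degrees of freedom, location $0$ and scale $1$. For every $t>0$, $$\frac{1}{1-F_\nu(t)}\le\frac{(t^2+\nu)^{\nu/2}}{\kappa},\qquad \kappa=\frac{\Gamma\left(\frac{\nu+1}{2}\right)(\nu-1)}{2\sqrt{\pi}\,\Gamma\left(\frac{\nu}{2}\right)}.$$ *)

theory Defs
  imports "HOL-Probability.Probability"
begin

definition student_t_density :: "real \<Rightarrow> real \<Rightarrow> real" where
  "student_t_density \<nu> x =
     Gamma ((\<nu> + 1) / 2) / (sqrt (\<nu> * pi) * Gamma (\<nu> / 2))
     * (1 + x\<^sup>2 / \<nu>) powr (- (\<nu> + 1) / 2)"

definition student_t_CDF :: "real \<Rightarrow> real \<Rightarrow> real" where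
  "student_t_CDF \<nu> t = (LINT x:{..t}|lborel. student_t_density \<nu> x)"

end

theory Submission
  imports Defs
begin

(* On the half line the substitution s = x^2 / (nu + x^2) turns the integral of the unnormalised
   density (1 + x^2/nu) powr (-(nu+1)/2) into sqrt nu / 2 * Beta (1/2) (nu/2); by evenness and
   Gamma (1/2) = sqrt pi the density therefore has total mass 1, so 1 - F(t) is its integral over
   (t, oo). For x >= 0 the inequality x <= sqrt (nu + x^2) bounds the density from below by a
   multiple of x (nu + x^2) powr (-(nu/2 + 1)), which has the explicit antiderivative
   -(nu + x^2) powr (-nu/2) / nu. This gives
     1 - F(t) >= Gamma ((nu+1)/2) / (sqrt pi Gamma (nu/2)) * nu powr (nu/2 - 1) * (nu + t^2) powr (-nu/2),
   and the theorem follows from (nu - 1)/2 <= nu powr (nu/2 - 1) for nu >= 2. *)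

definition student_t_kernel :: "real \<Rightarrow> real \<Rightarrow> real" where
  "student_t_kernel \<nu> x = (1 + x\<^sup>2 / \<nu>) powr (- (\<nu> + 1) / 2)"

lemma student_t_density_eq_kernel:
  "student_t_density \<nu> x
     = Gamma ((\<nu> + 1) / 2) / (sqrt (\<nu> * pi) * Gamma (\<nu> / 2)) * student_t_kernel \<nu> x"
  unfolding student_t_density_def student_t_kernel_def ..

lemma student_t_kernel_nonneg: "0 \<le> student_t_kernel \<nu> x"
  by (simp add: student_t_kernel_def)

lemma student_t_kernel_minus [simp]: "student_t_kernel \<nu> (- x) = student_t_kernel \<nu> x"
  by (simp add: student_t_kernel_def)

lemma continuous_on_student_t_kernel:
  assumes "\<nu> > 0"
  shows "continuous_on A (student_t_kernel \<nu>)"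
proof -
  have "1 + x\<^sup>2 / \<nu> \<noteq> 0" for x
    using divide_nonneg_pos[OF zero_le_power2 assms, of x] by linarith
  then show ?thesis
    unfolding student_t_kernel_def using assms by (intro continuous_intros) auto
qed

lemma student_t_kernel_eq:
  assumes "\<nu> > 0"
  shows "student_t_kernel \<nu> x = \<nu> powr ((\<nu> + 1) / 2) * (\<nu> + x\<^sup>2) powr (- (\<nu> + 1) / 2)"
proof -
  have "1 + x\<^sup>2 / \<nu> = (\<nu> + x\<^sup>2) / \<nu>"
    using assms by (simp add: field_simps)
  then have "student_t_kernel \<nu> x = ((\<nu> + x\<^sup>2) / \<nu>) powr (- ((\<nu> + 1) / 2))"
    unfolding student_t_kernel_def minus_divide_left by (rule arg_cong)
  also have "\<dots> = (\<nu> + x\<^sup>2) powr (- ((\<nu> + 1) / 2)) / \<nu> powr (- ((\<nu> + 1) / 2))"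
    using assms by (simp add: powr_divide add_pos_nonneg)
  also have "\<dots> = \<nu> powr ((\<nu> + 1) / 2) * (\<nu> + x\<^sup>2) powr (- ((\<nu> + 1) / 2))"
    by (simp add: powr_minus_divide)
  finally show ?thesis
    by (simp only: minus_divide_left)
qed

lemma student_t_kernel_Beta_substitution:
  fixes \<nu> y :: real
  assumes \<nu>: "\<nu> > 0" and y: "y > 0"
  shows "\<bar>2 * \<nu> * y / (\<nu> + y\<^sup>2)\<^sup>2\<bar>
           * ((y\<^sup>2 / (\<nu> + y\<^sup>2)) powr (1/2 - 1) * (1 - y\<^sup>2 / (\<nu> + y\<^sup>2)) powr (\<nu>/2 - 1))
         = 2 / sqrt \<nu> * student_t_kernel \<nu> y"
proof -
  define w where "w = \<nu> + y\<^sup>2"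
  have w: "w > 0"
    using \<nu> unfolding w_def by (simp add: add_pos_nonneg)
  have "1 - y\<^sup>2 / w = \<nu> / w" "1 + y\<^sup>2 / \<nu> = w / \<nu>"
    using \<nu> w by (simp_all add: w_def field_simps)
  moreover have "ln (2 * \<nu> * y / w\<^sup>2 * ((y\<^sup>2 / w) powr (1/2 - 1) * (\<nu> / w) powr (\<nu>/2 - 1)))
      = ln (2 / sqrt \<nu> * (w / \<nu>) powr (- (\<nu> + 1) / 2))"
    using \<nu> y w by (simp add: ln_mult ln_div ln_powr ln_sqrt ln_realpow) (simp add: field_simps)
  ultimately show ?thesis
    using \<nu> y w by (subst (asm) ln_inj_iff) (auto simp: student_t_kernel_def w_def[symmetric])
qed

lemma has_integral_student_t_kernel_Ioi:
  assumes \<nu>: "\<nu> > 0"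
  shows "(student_t_kernel \<nu> has_integral sqrt \<nu> / 2 * Beta (1/2) (\<nu>/2)) {0<..}"
proof -
  define g where "g u = u\<^sup>2 / (\<nu> + u\<^sup>2)" for u :: real
  define g' where "g' u = 2 * \<nu> * u / (\<nu> + u\<^sup>2)\<^sup>2" for u :: real
  define f where "f s = s powr (1/2 - 1) * (1 - s) powr (\<nu>/2 - 1)" for s :: real
  have pos: "\<nu> + u\<^sup>2 > 0" for u
    using \<nu> by (simp add: add_pos_nonneg)
  have image: "g ` {0<..} = {0<..<1}"
  proof
    show "g ` {0<..} \<subseteq> {0<..<1}"
      using pos \<nu> by (auto simp: g_def field_simps)
    show "{0<..<1} \<subseteq> g ` {0<..}"
    proof
      fix s :: real
      assume s: "s \<in> {0<..<1}"
      define u where "u = sqrt (\<nu> * s / (1 - s))"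
      have "u > 0" and u2: "u\<^sup>2 = \<nu> * s / (1 - s)"
        using s \<nu> by (simp_all add: u_def)
      moreover have "\<nu> + u\<^sup>2 = \<nu> / (1 - s)"
        using s unfolding u2 by (simp add: field_simps)
      ultimately show "s \<in> g ` {0<..}"
        using s \<nu> by (intro image_eqI[of _ _ u]) (auto simp: g_def u2)
    qed
  qed
  have inj: "inj_on g {0<..}"
  proof (rule inj_onI)
    fix a b :: real
    assume "a \<in> {0<..}" "b \<in> {0<..}" "g a = g b"
    then have "\<nu> * a\<^sup>2 = \<nu> * b\<^sup>2" "a > 0" "b > 0"
      using pos[of a] pos[of b] by (auto simp: g_def frac_eq_eq algebra_simps)
    then show "a = b"
      using \<nu> by (simp add: power2_eq_iff_nonneg)
  qed
  have deriv: "(g has_field_derivative g' u) (at u within {0<..})" for u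
    unfolding g_def g'_def using pos[of u]
    by (auto intro!: derivative_eq_intros simp: power2_eq_square field_simps)
  have "(f has_integral Beta (1/2) (\<nu>/2)) {0<..<1}"
    using has_integral_Beta_real[of "1/2" "\<nu>/2"] \<nu>
    unfolding f_def by (simp add: has_integral_Icc_iff_Ioo)
  moreover have "f absolutely_integrable_on {0<..<1}"
    using calculation by (subst absolutely_integrable_on_iff_nonneg) (auto simp: f_def)
  ultimately have "(\<lambda>u. \<bar>g' u\<bar> * f (g u)) absolutely_integrable_on {0<..}
      \<and> integral {0<..} (\<lambda>u. \<bar>g' u\<bar> * f (g u)) = Beta (1/2) (\<nu>/2)"
    by (intro has_absolute_integral_change_of_variables_1'[OF _ deriv inj, THEN iffD2])
       (auto simp: image integral_unique)
  then have substituted: "((\<lambda>u. \<bar>g' u\<bar> * f (g u)) has_integral Beta (1/2) (\<nu>/2)) {0<..}"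
    by (metis has_integral_integral set_lebesgue_integral_eq_integral(1))
  have integrand: "\<bar>g' u\<bar> * f (g u) = 2 / sqrt \<nu> * student_t_kernel \<nu> u" if "u \<in> {0<..}" for u
    using student_t_kernel_Beta_substitution[OF \<nu>, of u] that unfolding g_def g'_def f_def by simp
  have "((\<lambda>u. 2 / sqrt \<nu> * student_t_kernel \<nu> u) has_integral Beta (1/2) (\<nu>/2)) {0<..}"
    by (rule has_integral_eq[OF integrand substituted])
  from has_integral_mult_right[OF this, of "sqrt \<nu> / 2"] show ?thesis
    using \<nu> by simp
qed

lemma has_bochner_integral_lborel_of_has_integral:
  fixes f :: "'a::euclidean_space \<Rightarrow> real"
  assumes "f \<in> borel_measurable borel" "\<And>x. 0 \<le> f x" "(f has_integral I) UNIV"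
  shows "has_bochner_integral lborel f I"
proof (rule has_bochner_integral_nn_integral)
  show "0 \<le> I"
    using assms(3) by (rule has_integral_nonneg) (simp add: assms(2))
  show "(\<integral>\<^sup>+ x. ennreal (f x) \<partial>lborel) = ennreal I"
    using nn_integral_has_integral_lborel[OF assms] .
qed (use assms in auto)

lemma has_bochner_integral_student_t_kernel:
  assumes \<nu>: "\<nu> > 0"
  shows "has_bochner_integral lborel (student_t_kernel \<nu>) (sqrt \<nu> * Beta (1/2) (\<nu>/2))"
proof -
  have "negligible {x \<in> {0<..} - {0..}. student_t_kernel \<nu> x \<noteq> 0}"
       "negligible {x \<in> {0..} - {0<..}. student_t_kernel \<nu> x \<noteq> 0}"
    by (rule negligible_subset[of "{0}"]; auto)+
  then have "(student_t_kernel \<nu> has_integral sqrt \<nu> / 2 * Beta (1/2) (\<nu>/2)) {0..}"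
    using has_integral_student_t_kernel_Ioi[OF \<nu>] has_integral_spike_set_eq by blast
  then have "((\<lambda>x. indicator {0..} x *\<^sub>R student_t_kernel \<nu> x)
      has_integral sqrt \<nu> / 2 * Beta (1/2) (\<nu>/2)) UNIV"
    unfolding indicator_scaleR_eq_if has_integral_restrict_UNIV .
  moreover have "(\<lambda>x. indicator {0..} x *\<^sub>R student_t_kernel \<nu> x) \<in> borel_measurable borel"
    using borel_measurable_continuous_onI[OF continuous_on_student_t_kernel[OF \<nu>]]
    by (intro borel_measurable_scaleR borel_measurable_indicator) auto
  ultimately have "has_bochner_integral lborel (\<lambda>x. indicator {0..} x *\<^sub>R student_t_kernel \<nu> x)
      (sqrt \<nu> / 2 * Beta (1/2) (\<nu>/2))"
    by (intro has_bochner_integral_lborel_of_has_integral)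
       (auto simp: student_t_kernel_nonneg split: split_indicator)
  from has_bochner_integral_even_function[OF this] show ?thesis
    by simp
qed

lemma has_bochner_integral_student_t_density:
  assumes \<nu>: "\<nu> > 0"
  shows "has_bochner_integral lborel (student_t_density \<nu>) 1"
proof -
  have "Beta (1/2) (\<nu>/2) = sqrt pi * Gamma (\<nu> / 2) / Gamma ((\<nu> + 1) / 2)"
    by (simp add: Beta_def Gamma_one_half_real add_divide_distrib add.commute)
  moreover have "Gamma ((\<nu> + 1) / 2) \<noteq> 0" "Gamma (\<nu> / 2) \<noteq> 0"
    using \<nu> by (simp_all add: Gamma_real_pos less_imp_neq[symmetric])
  ultimately have "Gamma ((\<nu> + 1) / 2) / (sqrt (\<nu> * pi) * Gamma (\<nu> / 2)) * (sqrt \<nu> * Beta (1/2) (\<nu>/2)) = 1"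
    using \<nu> by (simp add: real_sqrt_mult)
  moreover have "student_t_density \<nu> = (\<lambda>x. Gamma ((\<nu> + 1) / 2) / (sqrt (\<nu> * pi) * Gamma (\<nu> / 2))
      * student_t_kernel \<nu> x)"
    by (rule ext) (rule student_t_density_eq_kernel)
  ultimately show ?thesis
    using has_bochner_integral_mult_right[OF has_bochner_integral_student_t_kernel[OF \<nu>]] by metis
qed

lemma one_minus_student_t_CDF:
  assumes "\<nu> > 0"
  shows "1 - student_t_CDF \<nu> t = (LBINT x:{t<..}. student_t_density \<nu> x)"
proof -
  have "integrable lborel (student_t_density \<nu>)" and total: "(LBINT x. student_t_density \<nu> x) = 1"
    using has_bochner_integral_student_t_density[OF assms] by (auto simp: has_bochner_integral_iff)
  then have "set_integrable lborel A (student_t_density \<nu>)" if "A \<in> sets borel" for A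
    unfolding set_integrable_def using that by (intro integrable_mult_indicator) auto
  then have "(LBINT x:{..t} \<union> {t<..}. student_t_density \<nu> x)
      = student_t_CDF \<nu> t + (LBINT x:{t<..}. student_t_density \<nu> x)"
    unfolding student_t_CDF_def by (intro set_integral_Un) auto
  moreover have "{..t} \<union> {t<..} = UNIV"
    by auto
  ultimately show ?thesis
    using total by (simp add: set_lebesgue_integral_def)
qed

lemma set_integral_x_mult_powr_Ioi:
  fixes a c t :: real
  assumes a: "a > 0" and c: "c > 0" and t: "t \<ge> 0"
  shows "set_integrable lborel {t<..} (\<lambda>x. x * (c + x\<^sup>2) powr (- (a + 1)))"
    and "(LBINT x:{t<..}. x * (c + x\<^sup>2) powr (- (a + 1))) = (c + t\<^sup>2) powr (- a) / (2 * a)"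
proof -
  define F where "F x = - ((c + x\<^sup>2) powr (- a)) / (2 * a)" for x :: real
  have pos: "c + x\<^sup>2 > 0" for x
    using c by (simp add: add_pos_nonneg)
  have "- (a + 1) = - a - 1"
    by simp
  then have deriv: "DERIV F x :> x * (c + x\<^sup>2) powr (- (a + 1))" for x
    unfolding F_def using pos[of x] a by (auto intro!: derivative_eq_intros)
  have cont: "isCont (\<lambda>x. x * (c + x\<^sup>2) powr (- (a + 1))) x" for x
    using pos[of x] by (auto intro!: continuous_intros)
  have lim_t: "((F \<circ> real_of_ereal) \<longlongrightarrow> F t) (at_right (ereal t))"
    unfolding ereal_tendsto_simps1 using DERIV_isCont[OF deriv[of t]]
    by (simp add: isCont_def filterlim_at_split)
  have lim_infinity: "((F \<circ> real_of_ereal) \<longlongrightarrow> 0) (at_left \<infinity>)"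
  proof -
    have "filterlim (\<lambda>x::real. c + x\<^sup>2) at_top at_top"
      by (intro filterlim_tendsto_add_at_top[OF tendsto_const] filterlim_pow_at_top filterlim_ident) auto
    then have "((\<lambda>x. (c + x\<^sup>2) powr (- a)) \<longlongrightarrow> 0) at_top"
      using a by (intro tendsto_neg_powr) auto
    from tendsto_divide_zero[OF tendsto_minus[OF this, simplified]] show ?thesis
      unfolding ereal_tendsto_simps1 F_def by simp
  qed
  have nonneg: "AE x in lborel. ereal t < ereal x \<longrightarrow> ereal x < \<infinity> \<longrightarrow> 0 \<le> x * (c + x\<^sup>2) powr (- (a + 1))"
    using t by auto
  note FTC = interval_integral_FTC_nonneg[of "ereal t" \<infinity> F, OF _ deriv cont nonneg lim_t lim_infinity]
  show "set_integrable lborel {t<..} (\<lambda>x. x * (c + x\<^sup>2) powr (- (a + 1)))"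
      and "(LBINT x:{t<..}. x * (c + x\<^sup>2) powr (- (a + 1))) = (c + t\<^sup>2) powr (- a) / (2 * a)"
    using FTC by (simp_all add: interval_integral_to_infinity_eq F_def)
qed

lemma student_t_kernel_ge:
  assumes \<nu>: "\<nu> > 0" and x: "x \<ge> 0"
  shows "\<nu> powr ((\<nu> + 1) / 2) * (x * (\<nu> + x\<^sup>2) powr (- (\<nu> / 2 + 1))) \<le> student_t_kernel \<nu> x"
proof -
  have pos: "\<nu> + x\<^sup>2 > 0"
    using \<nu> by (simp add: add_pos_nonneg)
  have "x \<le> (\<nu> + x\<^sup>2) powr (1/2)"
    using \<nu> x pos by (simp add: powr_half_sqrt real_le_rsqrt)
  then have "x * (\<nu> + x\<^sup>2) powr (- (\<nu> / 2 + 1)) \<le> (\<nu> + x\<^sup>2) powr (1/2) * (\<nu> + x\<^sup>2) powr (- (\<nu> / 2 + 1))"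
    by (simp add: mult_right_mono)
  also have "\<dots> = (\<nu> + x\<^sup>2) powr (- (\<nu> + 1) / 2)"
    by (simp add: powr_add[symmetric] field_simps)
  finally show ?thesis
    using \<nu> by (simp add: student_t_kernel_eq mult_left_mono)
qed

lemma student_t_tail_ge:
  assumes \<nu>: "\<nu> > 0" and t: "t \<ge> 0"
  shows "Gamma ((\<nu> + 1) / 2) / (sqrt pi * Gamma (\<nu> / 2)) * \<nu> powr (\<nu> / 2 - 1) * (\<nu> + t\<^sup>2) powr (- (\<nu> / 2))
           \<le> 1 - student_t_CDF \<nu> t"
proof -
  define C where "C = Gamma ((\<nu> + 1) / 2) / (sqrt (\<nu> * pi) * Gamma (\<nu> / 2))"
  define m where "m x = C * \<nu> powr ((\<nu> + 1) / 2) * (x * (\<nu> + x\<^sup>2) powr (- (\<nu> / 2 + 1)))" for x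
  have C: "C > 0"
    using \<nu> by (simp add: C_def Gamma_real_pos)
  note tail = set_integral_x_mult_powr_Ioi[of "\<nu> / 2" \<nu> t]
  have "set_integrable lborel {t<..} m"
    using tail \<nu> t unfolding m_def by (auto intro: set_integrable_mult_right)
  moreover have "set_integrable lborel {t<..} (student_t_density \<nu>)"
    using has_bochner_integral_student_t_density[OF \<nu>] unfolding set_integrable_def
    by (intro integrable_mult_indicator) (auto simp: has_bochner_integral_iff)
  moreover have "m x \<le> student_t_density \<nu> x" if "x \<in> {t<..}" for x
    using student_t_kernel_ge[OF \<nu>, of x] that t C
    by (simp add: m_def student_t_density_eq_kernel C_def[symmetric] mult.assoc mult_left_mono)
  ultimately have tail_ge_minorant: "(LBINT x:{t<..}. m x) \<le> 1 - student_t_CDF \<nu> t"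
    unfolding one_minus_student_t_CDF[OF \<nu>] by (rule set_integral_mono)
  have "\<nu> powr ((\<nu> + 1) / 2) = \<nu> powr (\<nu> / 2 - 1) * \<nu> * sqrt \<nu>"
  proof -
    have "(\<nu> + 1) / 2 = (\<nu> / 2 - 1) + 1 + 1/2"
      by (simp add: field_simps)
    then have "\<nu> powr ((\<nu> + 1) / 2) = \<nu> powr (\<nu> / 2 - 1) * \<nu> powr 1 * \<nu> powr (1/2)"
      by (simp only: powr_add)
    then show ?thesis
      using \<nu> by (simp add: powr_half_sqrt)
  qed
  then have "Gamma ((\<nu> + 1) / 2) / (sqrt pi * Gamma (\<nu> / 2)) * \<nu> powr (\<nu> / 2 - 1) * (\<nu> + t\<^sup>2) powr (- (\<nu> / 2))
      = C * \<nu> powr ((\<nu> + 1) / 2) * ((\<nu> + t\<^sup>2) powr (- (\<nu> / 2)) / \<nu>)"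
    using \<nu> by (simp add: C_def real_sqrt_mult)
  also have "\<dots> = (LBINT x:{t<..}. m x)"
    using tail \<nu> t unfolding m_def by (simp add: set_integral_mult_right)
  finally show ?thesis
    using tail_ge_minorant by simp
qed

lemma half_pred_le_powr:
  fixes v :: real
  assumes "v \<ge> 2"
  shows "(v - 1) / 2 \<le> v powr (v / 2 - 1)"
proof (cases "v \<le> 3")
  case True
  then show ?thesis
    using assms ge_one_powr_ge_zero[of v "v / 2 - 1"] by simp
next
  case False
  show ?thesis
  proof (cases "v \<le> 4")
    case True
    have "3/2 \<le> sqrt v"
      using False by (intro real_le_rsqrt) (simp add: power2_eq_square)
    moreover have "v powr (1/2) \<le> v powr (v/2 - 1)"
      using False by (intro powr_mono) auto
    ultimately show ?thesis
      using True assms by (simp add: powr_half_sqrt)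
  next
    case False
    then have "v powr 1 \<le> v powr (v/2 - 1)"
      by (intro powr_mono) auto
    then show ?thesis
      using False by simp
  qed
qed

theorem corollary3:
  fixes \<nu> t :: real
  assumes "\<nu> > 2" and "t > 0"
  shows "1 / (1 - student_t_CDF \<nu> t)
           \<le> (t\<^sup>2 + \<nu>) powr (\<nu> / 2)
              / (Gamma ((\<nu> + 1) / 2) * (\<nu> - 1) / (2 * sqrt pi * Gamma (\<nu> / 2)))"
proof -
  define K where "K = Gamma ((\<nu> + 1) / 2) / (sqrt pi * Gamma (\<nu> / 2))"
  define W where "W = (t\<^sup>2 + \<nu>) powr (\<nu> / 2)"
  have "t\<^sup>2 + \<nu> > 0"
    using assms by (simp add: add_pos_nonneg)
  then have K: "K > 0" and W: "W > 0"
    using assms by (simp_all add: K_def W_def Gamma_real_pos)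
  have lower: "K * ((\<nu> - 1) / 2) / W \<le> 1 - student_t_CDF \<nu> t"
  proof -
    have "K * ((\<nu> - 1) / 2) / W \<le> K * \<nu> powr (\<nu> / 2 - 1) / W"
      using half_pred_le_powr[of \<nu>] assms K W by (intro divide_right_mono mult_left_mono) auto
    also have "\<dots> \<le> 1 - student_t_CDF \<nu> t"
      using student_t_tail_ge[of \<nu> t] assms
      by (simp add: K_def W_def powr_minus_divide add.commute)
    finally show ?thesis .
  qed
  have "K * ((\<nu> - 1) / 2) / W > 0"
    using assms K W by simp
  then have "1 / (1 - student_t_CDF \<nu> t) \<le> 1 / (K * ((\<nu> - 1) / 2) / W)"
    using lower by (intro divide_left_mono mult_pos_pos) auto
  also have "\<dots> = W / (Gamma ((\<nu> + 1) / 2) * (\<nu> - 1) / (2 * sqrt pi * Gamma (\<nu> / 2)))"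
    by (simp add: K_def)
  finally show ?thesis
    unfolding W_def .
qed

end
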